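(* Let $(X,0)$ be a pointed CFG-space over a Boolean algebra $B$, and let $U_1,U_2\subset X$ be subsets which are CFG-spaces with the restricted metric and satisfy $0\in U_1\cap U_2$. If $U_1$ is isometric to $U_2$, then $U_1^\perp$ is isometric to $U_2^\perp$.
   Context: A Boolean metric space over $B$ is a set $X$ with symmetric $d:X\times X\to B$, $d(x,y)=0$ iff $x=y$, and $d(x,z)\le d(x,y)\vee d(y,z)$. An isometry is a bijection preserving $d$. A partition of $B$ is a finite family of pairwise disjoint elements with supremum $1$; $x$ is a convex combination of $x_0,\dots,x_n$ with coefficients a partition $a_0,\dots,a_n$ if $a_i\wedge d(x,x_i)=0$ for all $i$. A CFG-space is a Boolean metric space that is convex (every such convex combination of its points exists in it) and finitely generated (some finite subset $S$ has every point as a convex combination of points of $S$). A pointed space is a pair $(X,0)$ with $0\in X$ a fixed point; write $|x|=d(x,0)$. Elements $x,y$ are orthogonal, $x\perp y$, if $d(x,y)=|x|\vee|y|$. For $U\subset X$ with $0\in U$, $U^\perp=\{y\in X: x\perp y\ \forall x\in U\}$ (with the restricted metric). *)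

theory Defs
  imports Main
begin

text \<open>Boolean metric spaces over a Boolean algebra 'b, with carrier X :: 'a set
  and distance d :: 'a => 'a => 'b (only its values on X matter).\<close>

definition bool_metric_space :: "'a set \<Rightarrow> ('a \<Rightarrow> 'a \<Rightarrow> 'b::boolean_algebra) \<Rightarrow> bool" where
  "bool_metric_space X d \<longleftrightarrow>
     (\<forall>x\<in>X. \<forall>y\<in>X. d x y = d y x) \<and>
     (\<forall>x\<in>X. \<forall>y\<in>X. d x y = bot \<longleftrightarrow> x = y) \<and>
     (\<forall>x\<in>X. \<forall>y\<in>X. \<forall>z\<in>X. d x z \<le> sup (d x y) (d y z))"

definition is_partition :: "nat \<Rightarrow> (nat \<Rightarrow> 'b::boolean_algebra) \<Rightarrow> bool" where
  "is_partition n a \<longleftrightarrow>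
     (\<forall>i\<le>n. \<forall>j\<le>n. i \<noteq> j \<longrightarrow> inf (a i) (a j) = bot) \<and>
     Sup_fin (a ` {..n}) = top"

definition is_convex_comb ::
  "('a \<Rightarrow> 'a \<Rightarrow> 'b::boolean_algebra) \<Rightarrow> 'a \<Rightarrow> nat \<Rightarrow> (nat \<Rightarrow> 'b) \<Rightarrow> (nat \<Rightarrow> 'a) \<Rightarrow> bool" where
  "is_convex_comb d x n a xs \<longleftrightarrow> is_partition n a \<and> (\<forall>i\<le>n. inf (a i) (d x (xs i)) = bot)"

definition bms_convex :: "'a set \<Rightarrow> ('a \<Rightarrow> 'a \<Rightarrow> 'b::boolean_algebra) \<Rightarrow> bool" where
  "bms_convex X d \<longleftrightarrow>
     (\<forall>n a xs. is_partition n a \<and> (\<forall>i\<le>n. xs i \<in> X) \<longrightarrow>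
        (\<exists>x\<in>X. is_convex_comb d x n a xs))"

definition bms_fin_gen :: "'a set \<Rightarrow> ('a \<Rightarrow> 'a \<Rightarrow> 'b::boolean_algebra) \<Rightarrow> bool" where
  "bms_fin_gen X d \<longleftrightarrow>
     (\<exists>S. finite S \<and> S \<subseteq> X \<and>
        (\<forall>x\<in>X. \<exists>n a xs. (\<forall>i\<le>n. xs i \<in> S) \<and> is_convex_comb d x n a xs))"

definition CFG_space :: "'a set \<Rightarrow> ('a \<Rightarrow> 'a \<Rightarrow> 'b::boolean_algebra) \<Rightarrow> bool" where
  "CFG_space X d \<longleftrightarrow> bool_metric_space X d \<and> bms_convex X d \<and> bms_fin_gen X d"

definition isometric :: "('a \<Rightarrow> 'a \<Rightarrow> 'b) \<Rightarrow> 'a set \<Rightarrow> 'a set \<Rightarrow> bool" where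
  "isometric d U V \<longleftrightarrow>
     (\<exists>f. bij_betw f U V \<and> (\<forall>x\<in>U. \<forall>y\<in>U. d (f x) (f y) = d x y))"

definition orth :: "('a \<Rightarrow> 'a \<Rightarrow> 'b::boolean_algebra) \<Rightarrow> 'a \<Rightarrow> 'a \<Rightarrow> 'a \<Rightarrow> bool" where
  "orth d z x y \<longleftrightarrow> d x y = sup (d x z) (d y z)"

definition perp :: "'a set \<Rightarrow> ('a \<Rightarrow> 'a \<Rightarrow> 'b::boolean_algebra) \<Rightarrow> 'a \<Rightarrow> 'a set \<Rightarrow> 'a set" where
  "perp X d z U = {y \<in> X. \<forall>x\<in>U. orth d z x y}"

end

theory Submission
  imports Defs
begin

(* In a convex Boolean metric space X any two points a, b can be
   exchanged by an involutive isometry of X, the swap sw a b: on the part of the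
   Boolean algebra where x = a it sends x to b, where x = b it sends x to a, and
   elsewhere it leaves x alone; convexity lets us glue these pieces together.
   A swap fixes every point equidistant from a and b, so composing swaps extends
   any distance-preserving map on a finite set to a global isometry of X.
   For the theorem, an isometry f : U1 -> U2 is first composed with the swap of
   z and f z (inside the convex space U2) so that it fixes z; then it is extended
   to a global isometry g agreeing with f on a finite generating set of U1, hence,
   as convex combinations are unique, on all of U1.  A global isometry fixing z
   preserves orthogonality with respect to z, so g maps U1^perp onto U2^perp. *)

lemma disjoint_iff_le_compl: "inf (r::'b::boolean_algebra) c = bot \<longleftrightarrow> r \<le> - c"
  using shunt1[of r c bot] by (simp add: bot_unique)

lemma disjoint_partition_bot:
  assumes "is_partition n a" "\<forall>i\<le>n. inf (a i) (c::'b::boolean_algebra) = bot"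
  shows "c = bot"
proof -
  have "Sup_fin (a ` {..n}) \<le> - c"
    by (rule Sup_fin.boundedI) (use assms(2) disjoint_iff_le_compl in auto)
  then have "- c = top" using assms(1) top_unique unfolding is_partition_def by auto
  then show ?thesis by (metis double_compl compl_top_eq)
qed

locale convex_bms =
  fixes X :: "'a set" and d :: "'a \<Rightarrow> 'a \<Rightarrow> 'b::boolean_algebra"
  assumes metric: "bool_metric_space X d" and convex: "bms_convex X d"
begin

lemma d_sym: "x \<in> X \<Longrightarrow> y \<in> X \<Longrightarrow> d x y = d y x"
  using metric unfolding bool_metric_space_def by blast

lemma d_eq_bot: "x \<in> X \<Longrightarrow> y \<in> X \<Longrightarrow> d x y = bot \<longleftrightarrow> x = y"
  using metric unfolding bool_metric_space_def by blast

lemma d_self [simp]: "x \<in> X \<Longrightarrow> d x x = bot"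
  using d_eq_bot by blast

lemma d_triangle: "x \<in> X \<Longrightarrow> y \<in> X \<Longrightarrow> z \<in> X \<Longrightarrow> d x z \<le> sup (d x y) (d y z)"
  using metric unfolding bool_metric_space_def by blast

(* x and y agree on r: they coincide "on the part r" of the Boolean algebra. *)
definition agree :: "'b \<Rightarrow> 'a \<Rightarrow> 'a \<Rightarrow> bool" where
  "agree r x y \<longleftrightarrow> inf r (d x y) = bot"

lemma agree_le: "agree r x y \<longleftrightarrow> r \<le> - d x y"
  unfolding agree_def by (rule disjoint_iff_le_compl)

lemma agree_mono: "r' \<le> r \<Longrightarrow> agree r x y \<Longrightarrow> agree r' x y"
  unfolding agree_le by auto

lemma agree_self: "x \<in> X \<Longrightarrow> y \<in> X \<Longrightarrow> agree (- d x y) x y"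
  unfolding agree_def by (simp add: inf_commute)

lemma agree_sym: "x \<in> X \<Longrightarrow> y \<in> X \<Longrightarrow> agree r x y \<Longrightarrow> agree r y x"
  unfolding agree_def using d_sym by simp

lemma agree_trans:
  assumes "x \<in> X" "y \<in> X" "w \<in> X" "agree r x y" "agree r y w"
  shows "agree r x w"
proof -
  have "inf r (d x w) \<le> inf r (sup (d x y) (d y w))"
    using d_triangle[OF assms(1-3)] inf_mono by blast
  also have "\<dots> = sup (inf r (d x y)) (inf r (d y w))" by (simp add: inf_sup_distrib1)
  also have "\<dots> = bot" using assms(4,5) unfolding agree_def by simp
  finally show ?thesis unfolding agree_def using bot_unique by blast
qed

lemma agree_cases: "agree (inf r c) x y \<Longrightarrow> agree (inf r (- c)) x y \<Longrightarrow> agree r x y"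
proof -
  assume "agree (inf r c) x y" "agree (inf r (- c)) x y"
  then have "sup (inf r c) (inf r (- c)) \<le> - d x y" unfolding agree_le by simp
  moreover have "sup (inf r c) (inf r (- c)) = r" by (simp add: inf_sup_distrib1[symmetric])
  ultimately show ?thesis unfolding agree_le by simp
qed

lemma agree_compl_eq:
  assumes "x \<in> X" "y \<in> X" "agree c x y" "agree (- c) x y"
  shows "x = y"
  using agree_cases[of top c x y] assms d_eq_bot unfolding agree_def by simp

lemma agree_dist:
  assumes "x \<in> X" "x' \<in> X" "y \<in> X" "agree r x x'"
  shows "inf r (d x y) = inf r (d x' y)"
proof -
  have le: "inf r (d u y) \<le> inf r (d u' y)"
    if "u \<in> X" "u' \<in> X" "agree r u u'" for u u'
  proof -
    have "inf r (d u y) \<le> inf r (sup (d u u') (d u' y))"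
      using d_triangle[OF that(1,2) assms(3)] inf_mono by blast
    also have "\<dots> = sup (inf r (d u u')) (inf r (d u' y))" by (simp add: inf_sup_distrib1)
    also have "\<dots> = inf r (d u' y)" using that(3) unfolding agree_def by simp
    finally show ?thesis .
  qed
  show ?thesis using le[OF assms(1,2,4)] le[OF assms(2,1) agree_sym[OF assms(1,2,4)]] by (rule antisym)
qed

lemma agree_transfer_le:
  "x \<in> X \<Longrightarrow> y \<in> X \<Longrightarrow> a \<in> X \<Longrightarrow> agree r x y \<Longrightarrow> r \<le> d x a \<Longrightarrow> r \<le> d y a"
  using agree_dist[of x y a r] by (metis inf.absorb_iff1 inf.orderI)

lemma agree_transfer_le_compl:
  "x \<in> X \<Longrightarrow> y \<in> X \<Longrightarrow> a \<in> X \<Longrightarrow> agree r x y \<Longrightarrow> r \<le> - d x a \<Longrightarrow> r \<le> - d y a"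
  using agree_dist[of x y a r] by (metis disjoint_iff_le_compl)

(* Convexity with the two-block partition {c, -c}: any convex Y contains a point
   agreeing with x on c and with y on -c. *)
lemma glue_exists:
  assumes "bms_convex Y d" "x \<in> Y" "y \<in> Y"
  shows "\<exists>w\<in>Y. agree c w x \<and> agree (- c) w y"
proof -
  define a where "a = (\<lambda>i::nat. if i = 0 then c else - c)"
  define xs where "xs = (\<lambda>i::nat. if i = 0 then x else y)"
  have "{..Suc 0} = {0, Suc 0}" by auto
  then have "is_partition 1 a"
    unfolding is_partition_def a_def by (auto simp: inf_commute)
  moreover have "\<forall>i\<le>1. xs i \<in> Y" using assms unfolding xs_def by auto
  ultimately obtain w where "w \<in> Y" "is_convex_comb d w 1 a xs"
    using assms(1) unfolding bms_convex_def by blast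
  then have "inf (a 0) (d w (xs 0)) = bot" "inf (a 1) (d w (xs 1)) = bot"
    unfolding is_convex_comb_def by auto
  then show ?thesis using \<open>w \<in> Y\<close> unfolding agree_def a_def xs_def by auto
qed

definition glue :: "'b \<Rightarrow> 'a \<Rightarrow> 'a \<Rightarrow> 'a" where
  "glue c x y = (SOME w. w \<in> X \<and> agree c w x \<and> agree (- c) w y)"

lemma glue:
  assumes "x \<in> X" "y \<in> X"
  shows "glue c x y \<in> X" "agree c (glue c x y) x" "agree (- c) (glue c x y) y"
proof -
  have "\<exists>w. w \<in> X \<and> agree c w x \<and> agree (- c) w y" using glue_exists[OF convex assms] by blast
  then have "glue c x y \<in> X \<and> agree c (glue c x y) x \<and> agree (- c) (glue c x y) y"
    unfolding glue_def by (rule someI_ex)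
  then show "glue c x y \<in> X" "agree c (glue c x y) x" "agree (- c) (glue c x y) y" by auto
qed

(* The glued point is unique, so gluing stays inside any convex subspace. *)
lemma glue_in_subspace:
  assumes "bms_convex Y d" "Y \<subseteq> X" "x \<in> Y" "y \<in> Y"
  shows "glue c x y \<in> Y"
proof -
  obtain w where w: "w \<in> Y" "agree c w x" "agree (- c) w y"
    using glue_exists[OF assms(1,3,4)] by blast
  have X: "x \<in> X" "y \<in> X" "w \<in> X" using assms w by auto
  note g = glue[OF X(1,2), of c]
  have "glue c x y = w"
  proof (rule agree_compl_eq[OF g(1) X(3)])
    show "agree c (glue c x y) w"
      using agree_trans[OF g(1) X(1,3) g(2) agree_sym[OF X(3,1) w(2)]] .
    show "agree (- c) (glue c x y) w"
      using agree_trans[OF g(1) X(2,3) g(3) agree_sym[OF X(3,2) w(3)]] .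
  qed
  then show ?thesis using w by simp
qed

(* The swap of a and b: b where x = a, a where x = b (and x \<noteq> a), x elsewhere. *)
definition sw :: "'a \<Rightarrow> 'a \<Rightarrow> 'a \<Rightarrow> 'a" where
  "sw a b x = glue (- d x a) b (glue (- d x b) a x)"

lemma sw_in_subspace:
  "bms_convex Y d \<Longrightarrow> Y \<subseteq> X \<Longrightarrow> a \<in> Y \<Longrightarrow> b \<in> Y \<Longrightarrow> x \<in> Y \<Longrightarrow> sw a b x \<in> Y"
  unfolding sw_def by (intro glue_in_subspace) (auto intro: glue_in_subspace)

lemma sw_in: "a \<in> X \<Longrightarrow> b \<in> X \<Longrightarrow> x \<in> X \<Longrightarrow> sw a b x \<in> X"
  using sw_in_subspace[OF convex] by blast

context
  fixes a b assumes ab: "a \<in> X" "b \<in> X"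
begin

lemma sw_at_a: "x \<in> X \<Longrightarrow> agree (- d x a) (sw a b x) b"
  unfolding sw_def using glue ab by simp

lemma sw_at_b:
  assumes "x \<in> X" shows "agree (inf (d x a) (- d x b)) (sw a b x) a"
proof -
  note g = glue[OF ab(1) assms, of "- d x b"]
  have "agree (d x a) (sw a b x) (glue (- d x b) a x)"
    unfolding sw_def using glue[OF ab(2) g(1), of "- d x a"] by simp
  then show ?thesis
    using agree_trans[OF sw_in[OF ab assms] g(1) ab(1)] agree_mono g(2)
    by (meson inf_le1 inf_le2)
qed

lemma sw_away:
  assumes "x \<in> X" shows "agree (inf (d x a) (d x b)) (sw a b x) x"
proof -
  have g: "glue (- d x b) a x \<in> X" "agree (d x b) (glue (- d x b) a x) x"
    using glue[OF ab(1) assms, of "- d x b"] by auto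
  have "agree (d x a) (sw a b x) (glue (- d x b) a x)"
    unfolding sw_def using glue[OF ab(2) g(1), of "- d x a"] by simp
  then show ?thesis
    using agree_trans[OF sw_in[OF ab assms] g(1) assms] agree_mono g(2)
    by (meson inf_le1 inf_le2)
qed

lemma sw_a: "sw a b a = b"
  using sw_at_a[OF ab(1)] ab d_eq_bot[OF sw_in[OF ab ab(1)] ab(2)] unfolding agree_def by simp

lemma sw_b: "sw a b b = a"
proof -
  have sb: "sw a b b \<in> X" using sw_in ab by simp
  have "agree (- d b a) (sw a b b) a"
    using agree_trans[OF sb ab(2) ab(1) sw_at_a[OF ab(2)] agree_self[OF ab(2,1)]] .
  moreover have "agree (- (- d b a)) (sw a b b) a"
    using sw_at_b[OF ab(2)] ab by simp
  ultimately show ?thesis using agree_compl_eq sb ab by blast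
qed

lemma sw_fixes_equidistant:
  assumes c: "c \<in> X" and eq: "d a c = d b c" shows "sw a b c = c"
proof -
  have sc: "sw a b c \<in> X" using sw_in ab c by simp
  have dc: "d c a = d c b" using eq d_sym ab c by simp
  have "agree (- d c a) b c" unfolding agree_def using dc d_sym[OF ab(2) c]
    by (simp add: inf_commute)
  then have "agree (- d c a) (sw a b c) c" using agree_trans[OF sc ab(2) c sw_at_a[OF c]] by simp
  moreover have "agree (d c a) (sw a b c) c"
    using sw_away[OF c] dc by simp
  ultimately show ?thesis using agree_compl_eq[OF sc c] by simp
qed

(* The swap is an involution; checked separately on the three regions of x. *)
lemma sw_involutive:
  assumes x: "x \<in> X" shows "sw a b (sw a b x) = x"
proof -
  define x' where "x' = sw a b x"
  have x': "x' \<in> X" unfolding x'_def using sw_in ab x by simp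
  have x'': "sw a b x' \<in> X" using sw_in ab x' by simp
  define R where "R = - d x a"
  have R: "agree R x' b" "agree R x a"
    unfolding x'_def R_def using sw_at_a[OF x] agree_self[OF x ab(1)] by auto
  txt \<open>Where x = a we have x' = b, so sw x' = a = x; split by whether x' = a there.\<close>
  have "agree (inf R (- d x' a)) (sw a b x') x"
  proof -
    have "agree (inf R (- d x' a)) (sw a b x') b" using agree_mono[OF _ sw_at_a[OF x']] by simp
    moreover have "agree (inf R (- d x' a)) b x'" using agree_mono[OF _ agree_sym[OF x' ab(2) R(1)]] by simp
    moreover have "agree (inf R (- d x' a)) x' a" using agree_mono[OF _ agree_self[OF x' ab(1)]] by simp
    moreover have "agree (inf R (- d x' a)) a x" using agree_mono[OF _ agree_sym[OF x ab(1) R(2)]] by simp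
    ultimately show ?thesis using agree_trans x' x'' x ab by meson
  qed
  moreover have "agree (inf R (- (- d x' a))) (sw a b x') x"
  proof -
    have "R \<le> - d x' b" using R(1) agree_le by simp
    then have "inf R (- (- d x' a)) \<le> inf (d x' a) (- d x' b)"
      by (simp add: le_infI1 le_infI2 inf_commute)
    then have "agree (inf R (- (- d x' a))) (sw a b x') a" using sw_at_b[OF x'] agree_mono by blast
    moreover have "agree (inf R (- (- d x' a))) a x" using agree_mono[OF _ agree_sym[OF x ab(1) R(2)]] by simp
    ultimately show ?thesis using agree_trans x'' x ab by meson
  qed
  ultimately have on_R: "agree R (sw a b x') x" by (rule agree_cases)
  txt \<open>Where x = b (and x \<noteq> a) we have x' = a, so sw x' = b = x.\<close>
  have "agree (inf (d x a) (- d x b)) (sw a b x') x"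
  proof -
    have "agree (inf (d x a) (- d x b)) x' a" unfolding x'_def using sw_at_b[OF x] .
    then have "inf (d x a) (- d x b) \<le> - d x' a" using agree_le by simp
    then have "agree (inf (d x a) (- d x b)) (sw a b x') b" using sw_at_a[OF x'] agree_mono by blast
    moreover have "agree (inf (d x a) (- d x b)) b x"
      using agree_mono[OF _ agree_self[OF x ab(2)]] agree_sym[OF x ab(2)] by simp
    ultimately show ?thesis using agree_trans x'' x ab by meson
  qed
  txt \<open>Away from a and b, x' = x and the swap leaves both alone.\<close>
  moreover have "agree (inf (d x a) (- (- d x b))) (sw a b x') x"
  proof -
    let ?R = "inf (d x a) (- (- d x b))"
    have e: "agree ?R x' x" unfolding x'_def using sw_away[OF x] by simp
    have "?R \<le> d x' a" using agree_transfer_le[OF x x' ab(1) agree_sym[OF x' x e]] by simp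
    moreover have "?R \<le> d x' b" using agree_transfer_le[OF x x' ab(2) agree_sym[OF x' x e]] by simp
    ultimately have "agree ?R (sw a b x') x'" using sw_away[OF x'] agree_mono by (meson le_inf_iff)
    then show ?thesis using agree_trans[OF x'' x' x _ e] by simp
  qed
  ultimately have "agree (- R) (sw a b x') x" unfolding R_def by (auto intro: agree_cases)
  then show ?thesis using agree_compl_eq[OF x'' x on_R] unfolding x'_def by simp
qed

lemma sw_nonexpansive:
  assumes x: "x \<in> X" and y: "y \<in> X" shows "agree (- d x y) (sw a b x) (sw a b y)"
proof -
  let ?c = "- d x y"
  have sx: "sw a b x \<in> X" and sy: "sw a b y \<in> X" using sw_in ab x y by auto
  have cxy: "agree ?c x y" using agree_self[OF x y] .
  have A: "agree (inf ?c (- d x a)) (sw a b x) (sw a b y)"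
  proof -
    let ?R = "inf ?c (- d x a)"
    have "?R \<le> - d y a" using agree_transfer_le_compl[OF x y ab(1) agree_mono[OF _ cxy]] by simp
    then have "agree ?R (sw a b y) b" using sw_at_a[OF y] agree_mono by blast
    moreover have "agree ?R (sw a b x) b" using agree_mono[OF _ sw_at_a[OF x]] by simp
    ultimately show ?thesis using agree_trans[OF sx ab(2) sy] agree_sym[OF sy ab(2)] by blast
  qed
  have B: "agree (inf (inf ?c (- (- d x a))) (- d x b)) (sw a b x) (sw a b y)"
  proof -
    let ?R = "inf (inf ?c (- (- d x a))) (- d x b)"
    have r: "agree ?R x y" using agree_mono[OF _ cxy] by (simp add: le_infI1)
    have "?R \<le> d y a" using agree_transfer_le[OF x y ab(1) r] by (simp add: le_infI1)
    moreover have "?R \<le> - d y b" using agree_transfer_le_compl[OF x y ab(2) r] by simp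
    ultimately have "agree ?R (sw a b y) a" using sw_at_b[OF y] agree_mono by (meson le_inf_iff)
    moreover have "agree ?R (sw a b x) a" using sw_at_b[OF x] agree_mono[of ?R "inf (d x a) (- d x b)"]
      by (simp add: le_infI1 inf.coboundedI2)
    ultimately show ?thesis using agree_trans[OF sx ab(1) sy] agree_sym[OF sy ab(1)] by blast
  qed
  have C: "agree (inf (inf ?c (- (- d x a))) (- (- d x b))) (sw a b x) (sw a b y)"
  proof -
    let ?R = "inf (inf ?c (- (- d x a))) (- (- d x b))"
    have r: "agree ?R x y" using agree_mono[OF _ cxy] by (simp add: le_infI1)
    have "?R \<le> d y a" using agree_transfer_le[OF x y ab(1) r] by (simp add: le_infI1)
    moreover have "?R \<le> d y b" using agree_transfer_le[OF x y ab(2) r] by simp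
    ultimately have "agree ?R (sw a b y) y" using sw_away[OF y] agree_mono by (meson le_inf_iff)
    moreover have "agree ?R (sw a b x) x" using sw_away[OF x] agree_mono[of ?R "inf (d x a) (d x b)"]
      by (simp add: le_infI1 inf.coboundedI2)
    ultimately show ?thesis
      using agree_trans[OF sx x sy _ agree_trans[OF x y sy r agree_sym[OF sy y]]] by blast
  qed
  show ?thesis using agree_cases[OF A agree_cases[OF B C]] .
qed

(* Being non-expansive and an involution, the swap is an isometry. *)
lemma sw_isometry:
  assumes x: "x \<in> X" and y: "y \<in> X" shows "d (sw a b x) (sw a b y) = d x y"
proof -
  have nonexp: "d (sw a b u) (sw a b v) \<le> d u v" if "u \<in> X" "v \<in> X" for u v
    using sw_nonexpansive[OF that] unfolding agree_le by simp
  have "d x y = d (sw a b (sw a b x)) (sw a b (sw a b y))" using sw_involutive x y by simp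
  also have "\<dots> \<le> d (sw a b x) (sw a b y)" using nonexp sw_in ab x y by simp
  finally show ?thesis using nonexp[OF x y] by simp
qed

end

(* Being an involution, a swap permutes every convex subspace containing a and b. *)
lemma sw_bij_subspace:
  assumes "bms_convex Y d" "Y \<subseteq> X" "a \<in> Y" "b \<in> Y"
  shows "bij_betw (sw a b) Y Y"
  using assms sw_in_subspace[OF assms(1,2,3,4)] sw_involutive[of a b]
  by (intro bij_betw_byWitness[where f'="sw a b"]) (auto simp: subset_iff)

definition self_isometry :: "('a \<Rightarrow> 'a) \<Rightarrow> bool" where
  "self_isometry g \<longleftrightarrow> bij_betw g X X \<and> (\<forall>x\<in>X. \<forall>y\<in>X. d (g x) (g y) = d x y)"

lemma self_isometry_in: "self_isometry g \<Longrightarrow> x \<in> X \<Longrightarrow> g x \<in> X"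
  unfolding self_isometry_def using bij_betwE by blast

lemma self_isometry_dist: "self_isometry g \<Longrightarrow> x \<in> X \<Longrightarrow> y \<in> X \<Longrightarrow> d (g x) (g y) = d x y"
  unfolding self_isometry_def by blast

lemma self_isometry_sw_comp:
  assumes "self_isometry g" "a \<in> X" "b \<in> X"
  shows "self_isometry (sw a b \<circ> g)"
proof -
  have "bij_betw (sw a b \<circ> g) X X"
    using assms(1) bij_betw_trans sw_bij_subspace[OF convex subset_refl assms(2,3)]
    unfolding self_isometry_def by blast
  then show ?thesis
    using assms(1) self_isometry_in[OF assms(1)] sw_isometry[OF assms(2,3)]
    unfolding self_isometry_def by simp
qed

(* Every distance-preserving map on a finite subset of X extends to an isometry
   of X: after matching T, the swap of g s and h s also matches s while fixing
   the points g t = h t, which are equidistant from g s and h s. *)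
lemma extend_finite_isometry:
  assumes "finite T" "T \<subseteq> X" "h ` T \<subseteq> X" "\<forall>x\<in>T. \<forall>y\<in>T. d (h x) (h y) = d x y"
  shows "\<exists>g. self_isometry g \<and> (\<forall>t\<in>T. g t = h t)"
  using assms
proof (induction T rule: finite_induct)
  case empty
  have "self_isometry id" unfolding self_isometry_def by simp
  then show ?case by blast
next
  case (insert s T)
  then obtain g where g: "self_isometry g" "\<forall>t\<in>T. g t = h t" by auto
  have s: "s \<in> X" "g s \<in> X" "h s \<in> X" using insert.prems self_isometry_in[OF g(1)] by auto
  have "sw (g s) (h s) (g t) = h t" if t: "t \<in> T" for t
  proof -
    have "t \<in> X" "h t \<in> X" using t insert.prems by auto
    then have "d (g s) (h t) = d (h s) (h t)"
      using g insert.prems t self_isometry_dist[OF g(1) s(1)] by (metis insert_iff)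
    then show ?thesis using sw_fixes_equidistant[OF s(2,3) \<open>h t \<in> X\<close>] g(2) t by simp
  qed
  then have "\<forall>t\<in>insert s T. (sw (g s) (h s) \<circ> g) t = h t" using sw_a[OF s(2,3)] by simp
  then show ?case using self_isometry_sw_comp[OF g(1) s(2,3)] by blast
qed

lemma convex_comb_unique:
  assumes "u \<in> X" "v \<in> X" "\<forall>i\<le>n. xs i \<in> X"
    and "is_convex_comb d u n a xs" "is_convex_comb d v n a xs"
  shows "u = v"
proof -
  have "\<forall>i\<le>n. inf (a i) (d u v) = bot"
  proof (intro allI impI)
    fix i assume i: "i \<le> n"
    have "agree (a i) u (xs i)" "agree (a i) v (xs i)"
      using assms(4,5) i unfolding is_convex_comb_def agree_def by auto
    then have "agree (a i) u v"
      using agree_trans[OF assms(1) _ assms(2)] agree_sym[OF assms(2)] assms(3) i by blast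
    then show "inf (a i) (d u v) = bot" unfolding agree_def .
  qed
  then have "d u v = bot" using disjoint_partition_bot assms(4) unfolding is_convex_comb_def by blast
  then show ?thesis using d_eq_bot assms by simp
qed

(* A distance-preserving map on a subset U generated by a finite set S extends
   to an isometry of X: extend it on S, and use uniqueness of convex combinations. *)
lemma extend_generated_isometry:
  assumes "U \<subseteq> X" "finite S" "S \<subseteq> U"
    and gen: "\<forall>u\<in>U. \<exists>n a xs. (\<forall>i\<le>n. xs i \<in> S) \<and> is_convex_comb d u n a xs"
    and h: "h ` U \<subseteq> X" "\<forall>x\<in>U. \<forall>y\<in>U. d (h x) (h y) = d x y"
  shows "\<exists>g. self_isometry g \<and> (\<forall>u\<in>U. g u = h u)"
proof -
  have "S \<subseteq> X" "h ` S \<subseteq> X" "\<forall>x\<in>S. \<forall>y\<in>S. d (h x) (h y) = d x y"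
    using assms(1,3) h by (auto simp: subset_iff)
  then obtain g where g: "self_isometry g" "\<forall>t\<in>S. g t = h t"
    using extend_finite_isometry[OF assms(2)] by blast
  have "g u = h u" if u: "u \<in> U" for u
  proof -
    obtain n a xs where xs: "\<forall>i\<le>n. xs i \<in> S" "is_convex_comb d u n a xs" using gen u by blast
    have xsU: "\<forall>i\<le>n. xs i \<in> U" using xs(1) assms(3) by blast
    have X: "u \<in> X" "\<forall>i\<le>n. xs i \<in> X" using u xsU assms(1) by auto
    show ?thesis
    proof (rule convex_comb_unique)
      show "g u \<in> X" "h u \<in> X" "\<forall>i\<le>n. g (xs i) \<in> X"
        using self_isometry_in[OF g(1)] X h(1) u by auto
      show "is_convex_comb d (g u) n a (\<lambda>i. g (xs i))"
        using xs(2) X self_isometry_dist[OF g(1)] unfolding is_convex_comb_def by simp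
      show "is_convex_comb d (h u) n a (\<lambda>i. g (xs i))"
        using xs g(2) h(2) u xsU unfolding is_convex_comb_def by simp
    qed
  qed
  then show ?thesis using g(1) by blast
qed

(* An isometry between convex subspaces through z can be composed with the swap
   of z and f z (an isometry of the target) so as to fix z. *)
lemma isometry_fixing_point:
  assumes "bms_convex V d" "V \<subseteq> X" "z \<in> U" "z \<in> V"
    and f: "bij_betw f U V" "\<forall>x\<in>U. \<forall>y\<in>U. d (f x) (f y) = d x y"
  shows "\<exists>f'. bij_betw f' U V \<and> (\<forall>x\<in>U. \<forall>y\<in>U. d (f' x) (f' y) = d x y) \<and> f' z = z"
proof -
  have fz: "f z \<in> V" using f(1) assms(3) bij_betwE by blast
  have zX: "z \<in> X" "f z \<in> X" using fz assms(2,4) by auto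
  have fX: "f x \<in> X" if "x \<in> U" for x using f(1) that assms(2) bij_betwE by blast
  let ?f' = "sw z (f z) \<circ> f"
  have "bij_betw ?f' U V" using bij_betw_trans[OF f(1) sw_bij_subspace[OF assms(1,2,4) fz]] .
  moreover have "\<forall>x\<in>U. \<forall>y\<in>U. d (?f' x) (?f' y) = d x y"
    using sw_isometry[OF zX] fX f(2) by simp
  moreover have "?f' z = z" using sw_b[OF zX] by simp
  ultimately show ?thesis by blast
qed

lemma self_isometry_orth:
  assumes g: "self_isometry g" "g z = z" and "z \<in> X" "u \<in> X" "y \<in> X"
  shows "orth d z (g u) (g y) \<longleftrightarrow> orth d z u y"
proof -
  have "orth d z (g u) (g y) \<longleftrightarrow> orth d (g z) (g u) (g y)" using g(2) by simp
  also have "\<dots> \<longleftrightarrow> orth d z u y"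
    using self_isometry_dist[OF g(1)] assms(3-5) unfolding orth_def by simp
  finally show ?thesis .
qed

lemma self_isometry_perp_image:
  assumes g: "self_isometry g" "g z = z" and "z \<in> X" "U \<subseteq> X"
  shows "g ` perp X d z U = perp X d z (g ` U)"
proof
  have orth: "orth d z (g u) (g y) \<longleftrightarrow> orth d z u y" if "u \<in> U" "y \<in> X" for u y
    using self_isometry_orth[OF g assms(3)] that assms(4) by blast
  show "g ` perp X d z U \<subseteq> perp X d z (g ` U)"
    unfolding perp_def using orth self_isometry_in[OF g(1)] by auto
  show "perp X d z (g ` U) \<subseteq> g ` perp X d z U"
  proof
    fix y' assume y': "y' \<in> perp X d z (g ` U)"
    have "g ` X = X" using g(1) unfolding self_isometry_def bij_betw_def by simp
    then obtain y where "y \<in> X" "y' = g y" using y' unfolding perp_def by blast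
    then show "y' \<in> g ` perp X d z U" using y' orth unfolding perp_def by auto
  qed
qed

lemma self_isometry_isometric_image:
  assumes "self_isometry g" "A \<subseteq> X"
  shows "isometric d A (g ` A)"
proof -
  have "inj_on g X" using assms(1) unfolding self_isometry_def bij_betw_def by simp
  then have "inj_on g A" using inj_on_subset assms(2) by blast
  then have "bij_betw g A (g ` A)" by (simp add: bij_betw_imageI)
  moreover have "\<forall>x\<in>A. \<forall>y\<in>A. d (g x) (g y) = d x y"
    using self_isometry_dist[OF assms(1)] assms(2) by (simp add: subset_iff)
  ultimately show ?thesis unfolding isometric_def by blast
qed

end

theorem theorem3p1:
  fixes X :: "'a set" and d :: "'a \<Rightarrow> 'a \<Rightarrow> 'b::boolean_algebra" and z :: 'a
    and U1 U2 :: "'a set"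
  assumes "CFG_space X d" and "z \<in> X"
    and "U1 \<subseteq> X" and "U2 \<subseteq> X"
    and "CFG_space U1 d" and "CFG_space U2 d"
    and "z \<in> U1" and "z \<in> U2"
    and "isometric d U1 U2"
  shows "isometric d (perp X d z U1) (perp X d z U2)"
proof -
  interpret convex_bms X d using assms(1) unfolding CFG_space_def by unfold_locales auto
  have convex2: "bms_convex U2 d" using assms(6) unfolding CFG_space_def by simp
  obtain f where "bij_betw f U1 U2" "\<forall>x\<in>U1. \<forall>y\<in>U1. d (f x) (f y) = d x y"
    using assms(9) unfolding isometric_def by blast
  then obtain f' where f': "bij_betw f' U1 U2" "\<forall>x\<in>U1. \<forall>y\<in>U1. d (f' x) (f' y) = d x y"
    "f' z = z"
    using isometry_fixing_point[OF convex2 assms(4,7,8)] by blast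
  obtain S where S: "finite S" "S \<subseteq> U1"
    "\<forall>u\<in>U1. \<exists>n a xs. (\<forall>i\<le>n. xs i \<in> S) \<and> is_convex_comb d u n a xs"
    using assms(5) unfolding CFG_space_def bms_fin_gen_def by blast
  have "f' ` U1 \<subseteq> X" using f'(1) assms(4) unfolding bij_betw_def by simp
  then obtain g where g: "self_isometry g" "\<forall>u\<in>U1. g u = f' u"
    using extend_generated_isometry[OF assms(3) S _ f'(2)] by blast
  have "g ` U1 = U2" using g(2) f'(1) image_cong[OF refl, of U1 g f'] unfolding bij_betw_def by simp
  moreover have "g z = z" using g(2) f'(3) assms(7) by simp
  ultimately have image: "g ` perp X d z U1 = perp X d z U2"
    using self_isometry_perp_image[OF g(1) _ assms(2,3)] by simp
  have "perp X d z U1 \<subseteq> X" unfolding perp_def by blast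
  then show ?thesis using self_isometry_isometric_image[OF g(1)] image by metis
qed

end
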